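(* Let $A$ be an idempotent $\Gamma$-graded ring. For every $M\in A\text{-gr}$ the map $\chi_M:M\to A\cdot\mathrm{HOM}_A(A,M)$ defined by $\chi_M(m)(a)=am$ for $a\in A$ is a graded isomorphism in $A\text{-gr}$, and it is natural in $M$.
   Context: $\Gamma$ is a fixed multiplicative group. Rings are associative $\Gamma$-graded, not necessarily unital; $A$ is idempotent if $A^2=A$. A graded left $A$-module $M$ is unital if $AM=M$ and torsion-free if $Am=0$ implies $m=0$; $A\text{-gr}$ is the category of unital torsion-free graded left $A$-modules with degree-preserving $A$-linear maps. A left $A$-linear map $f:M\to N$ is graded of degree $\sigma$ if $f(M_\tau)\subseteq N_{\tau\sigma}$ for all $\tau$; $\mathrm{HOM}_A(M,N)=\bigoplus_\sigma \mathrm{HOM}_A(M,N)_\sigma$ is graded accordingly. $\mathrm{HOM}_A(A,M)$ is a graded left $A$-module via $(af)(x)=f(xa)$, and $A\cdot\mathrm{HOM}_A(A,M)$ is its submodule of finite sums $\sum a_if_i$. Naturality means: for a morphism $f:M\to N$ in $A\text{-gr}$, composing with $f$ maps $A\cdot\mathrm{HOM}_A(A,M)$ into $A\cdot\mathrm{HOM}_A(A,N)$ and $(f\circ -)\circ\chi_M=\chi_N\circ f$. *)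

theory Defs
  imports "HOL-Algebra.Group" "HOL-Library.Function_Algebras"
begin

text \<open>The grading group Gamma is a HOL-Algebra group G (multiplicative, not necessarily
commutative).  The ring A is the whole of a type of class ring (associative,
not necessarily unital); a graded module is a carrier set of a type of class
ab_group_add with a scalar action and a family of homogeneous components.\<close>

definition subgrp_add :: "'m::ab_group_add set \<Rightarrow> bool" where
  "subgrp_add S \<longleftrightarrow> 0 \<in> S \<and> (\<forall>x\<in>S. \<forall>y\<in>S. x + y \<in> S) \<and> (\<forall>x\<in>S. - x \<in> S)"

definition hdecomp :: "('g, 'b) monoid_scheme \<Rightarrow> ('g \<Rightarrow> 'm::ab_group_add set) \<Rightarrow> 'm \<Rightarrow> ('g \<Rightarrow> 'm) \<Rightarrow> bool" where
  "hdecomp G D x c \<longleftrightarrow> (\<forall>\<sigma>. \<sigma> \<notin> carrier G \<longrightarrow> c \<sigma> = 0) \<and> (\<forall>\<sigma>\<in>carrier G. c \<sigma> \<in> D \<sigma>)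
     \<and> finite {\<sigma>. c \<sigma> \<noteq> 0} \<and> x = (\<Sum>\<sigma>\<in>{\<sigma>. c \<sigma> \<noteq> 0}. c \<sigma>)"

definition graded_dsum :: "('g, 'b) monoid_scheme \<Rightarrow> ('g \<Rightarrow> 'm::ab_group_add set) \<Rightarrow> 'm set \<Rightarrow> bool" where
  "graded_dsum G D S \<longleftrightarrow> subgrp_add S \<and> (\<forall>\<sigma>\<in>carrier G. subgrp_add (D \<sigma>) \<and> D \<sigma> \<subseteq> S)
     \<and> (\<forall>x\<in>S. \<exists>!c. hdecomp G D x c)"

definition graded_ring :: "('g, 'b) monoid_scheme \<Rightarrow> ('g \<Rightarrow> 'a::ring set) \<Rightarrow> bool" where
  "graded_ring G Ag \<longleftrightarrow> group G \<and> graded_dsum G Ag UNIV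
     \<and> (\<forall>\<sigma>\<in>carrier G. \<forall>\<tau>\<in>carrier G. \<forall>a\<in>Ag \<sigma>. \<forall>b\<in>Ag \<tau>. a * b \<in> Ag (\<sigma> \<otimes>\<^bsub>G\<^esub> \<tau>))"

text \<open>A is idempotent: A^2 = A, i.e. every element is a finite sum of products.\<close>
definition idempotent_ring :: "'a::ring itself \<Rightarrow> bool" where
  "idempotent_ring _ \<longleftrightarrow> (\<forall>x::'a. \<exists>ps. x = sum_list (map (\<lambda>(a, b). a * b) ps))"

definition gr_module :: "('g, 'b) monoid_scheme \<Rightarrow> ('g \<Rightarrow> 'a::ring set)
    \<Rightarrow> 'm::ab_group_add set \<Rightarrow> ('a \<Rightarrow> 'm \<Rightarrow> 'm) \<Rightarrow> ('g \<Rightarrow> 'm set) \<Rightarrow> bool" where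
  "gr_module G Ag M sm Mg \<longleftrightarrow> subgrp_add M
     \<and> (\<forall>a. \<forall>m\<in>M. sm a m \<in> M)
     \<and> (\<forall>a b. \<forall>m\<in>M. sm (a + b) m = sm a m + sm b m)
     \<and> (\<forall>a. \<forall>m\<in>M. \<forall>n\<in>M. sm a (m + n) = sm a m + sm a n)
     \<and> (\<forall>a b. \<forall>m\<in>M. sm (a * b) m = sm a (sm b m))
     \<and> graded_dsum G Mg M
     \<and> (\<forall>\<sigma>\<in>carrier G. \<forall>\<tau>\<in>carrier G. \<forall>a\<in>Ag \<sigma>. \<forall>m\<in>Mg \<tau>. sm a m \<in> Mg (\<sigma> \<otimes>\<^bsub>G\<^esub> \<tau>))"

text \<open>Unital: AM = M (every element is a finite sum of a_i m_i).\<close>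
definition unital_module :: "'m::ab_group_add set \<Rightarrow> ('a \<Rightarrow> 'm \<Rightarrow> 'm) \<Rightarrow> bool" where
  "unital_module M sm \<longleftrightarrow> (\<forall>m\<in>M. \<exists>ps. (\<forall>(a, n)\<in>set ps. n \<in> M)
       \<and> m = sum_list (map (\<lambda>(a, n). sm a n) ps))"

definition torsion_free :: "'m::ab_group_add set \<Rightarrow> ('a \<Rightarrow> 'm \<Rightarrow> 'm) \<Rightarrow> bool" where
  "torsion_free M sm \<longleftrightarrow> (\<forall>m\<in>M. (\<forall>a. sm a m = 0) \<longrightarrow> m = 0)"

definition in_A_gr :: "('g, 'b) monoid_scheme \<Rightarrow> ('g \<Rightarrow> 'a::ring set)
    \<Rightarrow> 'm::ab_group_add set \<Rightarrow> ('a \<Rightarrow> 'm \<Rightarrow> 'm) \<Rightarrow> ('g \<Rightarrow> 'm set) \<Rightarrow> bool" where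
  "in_A_gr G Ag M sm Mg \<longleftrightarrow> gr_module G Ag M sm Mg \<and> unital_module M sm \<and> torsion_free M sm"

definition gr_hom :: "('g, 'b) monoid_scheme
    \<Rightarrow> 'm::ab_group_add set \<Rightarrow> ('a \<Rightarrow> 'm \<Rightarrow> 'm) \<Rightarrow> ('g \<Rightarrow> 'm set)
    \<Rightarrow> 'n::ab_group_add set \<Rightarrow> ('a \<Rightarrow> 'n \<Rightarrow> 'n) \<Rightarrow> ('g \<Rightarrow> 'n set) \<Rightarrow> ('m \<Rightarrow> 'n) \<Rightarrow> bool" where
  "gr_hom G M sm Mg N sn Ng f \<longleftrightarrow> (\<forall>m\<in>M. f m \<in> N)
     \<and> (\<forall>m\<in>M. \<forall>m'\<in>M. f (m + m') = f m + f m')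
     \<and> (\<forall>a. \<forall>m\<in>M. f (sm a m) = sn a (f m))
     \<and> (\<forall>\<sigma>\<in>carrier G. f ` Mg \<sigma> \<subseteq> Ng \<sigma>)"

definition HOM_deg :: "('g, 'b) monoid_scheme \<Rightarrow> ('g \<Rightarrow> 'a::ring set)
    \<Rightarrow> 'm::ab_group_add set \<Rightarrow> ('a \<Rightarrow> 'm \<Rightarrow> 'm) \<Rightarrow> ('g \<Rightarrow> 'm set) \<Rightarrow> 'g \<Rightarrow> ('a \<Rightarrow> 'm) set" where
  "HOM_deg G Ag M sm Mg \<sigma> = {f. (\<forall>x. f x \<in> M) \<and> (\<forall>x y. f (x + y) = f x + f y)
     \<and> (\<forall>a x. f (a * x) = sm a (f x))
     \<and> (\<forall>\<tau>\<in>carrier G. f ` Ag \<tau> \<subseteq> Mg (\<tau> \<otimes>\<^bsub>G\<^esub> \<sigma>))}"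

definition HOM :: "('g, 'b) monoid_scheme \<Rightarrow> ('g \<Rightarrow> 'a::ring set)
    \<Rightarrow> 'm::ab_group_add set \<Rightarrow> ('a \<Rightarrow> 'm \<Rightarrow> 'm) \<Rightarrow> ('g \<Rightarrow> 'm set) \<Rightarrow> ('a \<Rightarrow> 'm) set" where
  "HOM G Ag M sm Mg = {f. \<exists>c. hdecomp G (HOM_deg G Ag M sm Mg) f c}"

definition hom_act :: "'a::ring \<Rightarrow> ('a \<Rightarrow> 'm) \<Rightarrow> ('a \<Rightarrow> 'm)" where
  "hom_act a f = (\<lambda>x. f (x * a))"

definition AHOM :: "('g, 'b) monoid_scheme \<Rightarrow> ('g \<Rightarrow> 'a::ring set)
    \<Rightarrow> 'm::ab_group_add set \<Rightarrow> ('a \<Rightarrow> 'm \<Rightarrow> 'm) \<Rightarrow> ('g \<Rightarrow> 'm set) \<Rightarrow> ('a \<Rightarrow> 'm) set" where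
  "AHOM G Ag M sm Mg = {sum_list (map (\<lambda>(a, f). hom_act a f) ps) | ps.
       \<forall>(a, f)\<in>set ps. f \<in> HOM G Ag M sm Mg}"

definition AHOM_deg :: "('g, 'b) monoid_scheme \<Rightarrow> ('g \<Rightarrow> 'a::ring set)
    \<Rightarrow> 'm::ab_group_add set \<Rightarrow> ('a \<Rightarrow> 'm \<Rightarrow> 'm) \<Rightarrow> ('g \<Rightarrow> 'm set) \<Rightarrow> 'g \<Rightarrow> ('a \<Rightarrow> 'm) set" where
  "AHOM_deg G Ag M sm Mg \<sigma> = AHOM G Ag M sm Mg \<inter> HOM_deg G Ag M sm Mg \<sigma>"

definition chi :: "('a \<Rightarrow> 'm \<Rightarrow> 'm) \<Rightarrow> 'm \<Rightarrow> ('a \<Rightarrow> 'm)" where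
  "chi sm m = (\<lambda>a. sm a m)"

end

theory Submission
  imports Defs
begin

text \<open>The map \<open>\<chi>\<close> is additive and \<open>A\<close>-linear, and injective because \<open>M\<close> is torsion-free.
Its image is exactly \<open>A \<cdot> HOM(A, M)\<close>: unitality writes every \<open>m\<close> as \<open>\<Sum> a\<^sub>i n\<^sub>i\<close>, so that
\<open>\<chi> m = \<Sum> a\<^sub>i \<chi> n\<^sub>i\<close>, while conversely \<open>a g = \<chi> (g a)\<close> for every \<open>A\<close>-linear \<open>g\<close>. The grading
is respected in both directions: if \<open>\<chi> m\<close> has degree \<open>\<sigma>\<close> and \<open>y \<in> A\<^sub>\<tau>\<close>, then \<open>y m \<in> M\<^bsub>\<tau>\<sigma>\<^esub>\<close>
while the \<open>y m\<^sub>\<rho>\<close> lie in the distinct degrees \<open>\<tau>\<rho>\<close>, so \<open>y m\<^sub>\<rho> = 0\<close> for \<open>\<rho> \<noteq> \<sigma>\<close>; as \<open>A\<close> is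
the sum of its homogeneous components, torsion-freeness gives \<open>m\<^sub>\<rho> = 0\<close>. Hence \<open>\<chi>\<close> transports
the whole \<open>A\<close>-gr structure of \<open>M\<close> onto \<open>A \<cdot> HOM(A, M)\<close>, and naturality is the \<open>A\<close>-linearity
of morphisms.\<close>

section \<open>Additive maps on subgroups\<close>

definition additive_on :: "'a::ab_group_add set \<Rightarrow> ('a \<Rightarrow> 'b::ab_group_add) \<Rightarrow> bool" where
  "additive_on S h \<longleftrightarrow> (\<forall>x\<in>S. \<forall>y\<in>S. h (x + y) = h x + h y)"

lemma sum_apply: "sum f F x = (\<Sum>i\<in>F. f i x)"
  by (induction F rule: infinite_finite_induct) auto

lemma subgrp_add_UNIV: "subgrp_add UNIV"
  by (simp add: subgrp_add_def)

lemma subgrp_add_zero: "subgrp_add S \<Longrightarrow> 0 \<in> S"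
  by (simp add: subgrp_add_def)

lemma subgrp_add_add: "subgrp_add S \<Longrightarrow> x \<in> S \<Longrightarrow> y \<in> S \<Longrightarrow> x + y \<in> S"
  by (simp add: subgrp_add_def)

lemma subgrp_add_minus: "subgrp_add S \<Longrightarrow> x \<in> S \<Longrightarrow> - x \<in> S"
  by (simp add: subgrp_add_def)

lemma subgrp_add_diff: "subgrp_add S \<Longrightarrow> x \<in> S \<Longrightarrow> y \<in> S \<Longrightarrow> x - y \<in> S"
  by (metis diff_conv_add_uminus subgrp_add_add subgrp_add_minus)

lemma subgrp_add_sum: "subgrp_add S \<Longrightarrow> (\<And>i. i \<in> F \<Longrightarrow> x i \<in> S) \<Longrightarrow> sum x F \<in> S"
  by (induction F rule: infinite_finite_induct) (auto simp: subgrp_add_zero subgrp_add_add)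

lemma subgrp_add_sum_list: "subgrp_add S \<Longrightarrow> set xs \<subseteq> S \<Longrightarrow> sum_list xs \<in> S"
  by (induction xs) (auto simp: subgrp_add_zero subgrp_add_add)

lemma additive_onD: "additive_on S h \<Longrightarrow> x \<in> S \<Longrightarrow> y \<in> S \<Longrightarrow> h (x + y) = h x + h y"
  by (simp add: additive_on_def)

lemma additive_on_subset: "additive_on S h \<Longrightarrow> T \<subseteq> S \<Longrightarrow> additive_on T h"
  by (auto simp: additive_on_def)

lemma additive_on_zero:
  assumes "subgrp_add S" "additive_on S h"
  shows "h 0 = 0"
  using additive_onD[OF assms(2) subgrp_add_zero subgrp_add_zero] assms(1) by simp

lemma additive_on_minus:
  assumes S: "subgrp_add S" and h: "additive_on S h" and x: "x \<in> S"
  shows "h (- x) = - h x"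
proof -
  have "h x + h (- x) = 0"
    using additive_onD[OF h x subgrp_add_minus[OF S x]] additive_on_zero[OF S h] by simp
  then show ?thesis by (simp add: add_eq_0_iff2)
qed

lemma additive_on_diff:
  assumes S: "subgrp_add S" and h: "additive_on S h" and "x \<in> S" "y \<in> S"
  shows "h (x - y) = h x - h y"
  using additive_onD[OF h, of x "- y"] additive_on_minus[OF S h, of y] assms subgrp_add_minus[OF S]
  by simp

lemma additive_on_sum:
  assumes S: "subgrp_add S" and h: "additive_on S h" and x: "\<And>i. i \<in> F \<Longrightarrow> x i \<in> S"
  shows "h (sum x F) = (\<Sum>i\<in>F. h (x i))"
  using x
proof (induction F rule: infinite_finite_induct)
  case (insert i F)
  then show ?case using additive_onD[OF h] subgrp_add_sum[OF S, of F x] by simp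
qed (simp_all add: additive_on_zero[OF S h])

lemma additive_on_sum_list:
  assumes S: "subgrp_add S" and h: "additive_on S h"
  shows "set xs \<subseteq> S \<Longrightarrow> h (sum_list xs) = sum_list (map h xs)"
proof (induction xs)
  case (Cons x xs)
  then show ?case using additive_onD[OF h] subgrp_add_sum_list[OF S, of xs] by simp
qed (simp add: additive_on_zero[OF S h])

lemma subgrp_add_image:
  assumes S: "subgrp_add S" and h: "additive_on S h"
  shows "subgrp_add (h ` S)"
  unfolding subgrp_add_def
proof (intro conjI ballI)
  show "0 \<in> h ` S"
    using additive_on_zero[OF S h] subgrp_add_zero[OF S] by (metis image_eqI)
  fix y z assume "y \<in> h ` S" "z \<in> h ` S"
  then obtain u v where "u \<in> S" "v \<in> S" "y = h u" "z = h v" by blast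
  then show "y + z \<in> h ` S"
    using additive_onD[OF h] subgrp_add_add[OF S] by (metis image_eqI)
next
  fix y assume "y \<in> h ` S"
  then obtain u where "u \<in> S" "y = h u" by blast
  then show "- y \<in> h ` S"
    using additive_on_minus[OF S h] subgrp_add_minus[OF S] by (metis image_eqI)
qed

lemma inj_on_additive_eq_0_iff:
  assumes "subgrp_add S" "additive_on S h" "inj_on h S" "x \<in> S"
  shows "h x = 0 \<longleftrightarrow> x = 0"
  using assms by (metis additive_on_zero inj_on_eq_iff subgrp_add_zero)

section \<open>Homogeneous decompositions\<close>

lemma hdecompI:
  assumes "\<And>\<sigma>. \<sigma> \<notin> carrier G \<Longrightarrow> c \<sigma> = 0" "\<And>\<sigma>. \<sigma> \<in> carrier G \<Longrightarrow> c \<sigma> \<in> D \<sigma>"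
    and "finite F" "{\<sigma>. c \<sigma> \<noteq> 0} \<subseteq> F" "x = sum c F"
  shows "hdecomp G D x c"
proof -
  have "sum c F = sum c {\<sigma>. c \<sigma> \<noteq> 0}"
    by (rule sum.mono_neutral_right) (use assms in auto)
  then show ?thesis
    unfolding hdecomp_def using assms finite_subset by metis
qed

lemma hdecomp_support:
  assumes "hdecomp G D x c"
  shows "finite {\<sigma>. c \<sigma> \<noteq> 0}" "{\<sigma>. c \<sigma> \<noteq> 0} \<subseteq> carrier G"
  using assms unfolding hdecomp_def by blast+

lemma hdecomp_sum:
  assumes "hdecomp G D x c" "finite F" "{\<sigma>. c \<sigma> \<noteq> 0} \<subseteq> F"
  shows "x = sum c F"
proof -
  have "x = sum c {\<sigma>. c \<sigma> \<noteq> 0}"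
    using assms(1) unfolding hdecomp_def by blast
  also have "\<dots> = sum c F"
    by (rule sum.mono_neutral_left) (use assms in auto)
  finally show ?thesis .
qed

lemma hdecomp_component: "hdecomp G D x c \<Longrightarrow> \<sigma> \<in> carrier G \<Longrightarrow> c \<sigma> \<in> D \<sigma>"
  by (simp add: hdecomp_def)

lemma graded_dsum_subgrp: "graded_dsum G D S \<Longrightarrow> subgrp_add S"
  by (simp add: graded_dsum_def)

lemma graded_dsum_component_subgrp: "graded_dsum G D S \<Longrightarrow> \<sigma> \<in> carrier G \<Longrightarrow> subgrp_add (D \<sigma>)"
  by (simp add: graded_dsum_def)

lemma graded_dsum_component_subset: "graded_dsum G D S \<Longrightarrow> \<sigma> \<in> carrier G \<Longrightarrow> D \<sigma> \<subseteq> S"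
  by (simp add: graded_dsum_def)

lemma hdecomp_exists: "graded_dsum G D S \<Longrightarrow> x \<in> S \<Longrightarrow> \<exists>c. hdecomp G D x c"
  unfolding graded_dsum_def by blast

lemma hdecomp_unique:
  "graded_dsum G D S \<Longrightarrow> x \<in> S \<Longrightarrow> hdecomp G D x c \<Longrightarrow> hdecomp G D x c' \<Longrightarrow> c = c'"
  unfolding graded_dsum_def by blast

lemma hdecomp_component_in_ambient: "graded_dsum G D S \<Longrightarrow> hdecomp G D x c \<Longrightarrow> c \<sigma> \<in> S"
  unfolding hdecomp_def
  by (cases "\<sigma> \<in> carrier G") (auto dest: graded_dsum_component_subset graded_dsum_subgrp subgrp_add_zero)

lemma graded_dsum_independent:
  assumes gd: "graded_dsum G D S" and F: "finite F" and g: "inj_on g F" "g ` F \<subseteq> carrier G"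
    and d: "\<And>\<rho>. \<rho> \<in> F \<Longrightarrow> d \<rho> \<in> D (g \<rho>)" and sum_d: "sum d F = 0" and \<rho>: "\<rho> \<in> F"
  shows "d \<rho> = 0"
proof -
  define c where "c \<pi> = (if \<pi> \<in> g ` F then d (the_inv_into F g \<pi>) else 0)" for \<pi>
  have c_g: "c (g \<rho>') = d \<rho>'" if "\<rho>' \<in> F" for \<rho>'
    using that g(1) by (simp add: c_def the_inv_into_f_f)
  have "sum c (g ` F) = sum d F"
    using sum.reindex[OF g(1), of c] c_g by simp
  then have "hdecomp G D 0 c"
    using g F d sum_d subgrp_add_zero[OF graded_dsum_component_subgrp[OF gd]]
    by (intro hdecompI[where F = "g ` F"]) (auto simp: c_def the_inv_into_f_f)
  moreover have "hdecomp G D 0 (\<lambda>_. 0)"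
    using graded_dsum_component_subgrp[OF gd] subgrp_add_zero by (intro hdecompI[where F = "{}"]) auto
  ultimately have "c = (\<lambda>_. 0)"
    using hdecomp_unique[OF gd subgrp_add_zero[OF graded_dsum_subgrp[OF gd]]] by blast
  then show ?thesis
    using c_g[OF \<rho>] by metis
qed

lemma hdecomp_image:
  assumes gd: "graded_dsum G D S" and h: "additive_on S h"
    and D: "\<And>\<sigma>. \<sigma> \<in> carrier G \<Longrightarrow> h ` D \<sigma> \<subseteq> E \<sigma>" and c: "hdecomp G D x c"
  shows "hdecomp G E (h x) (h \<circ> c)"
proof -
  have S: "subgrp_add S" using graded_dsum_subgrp[OF gd] .
  have h0: "h 0 = 0" using additive_on_zero[OF S h] .
  have "h x = h (sum c {\<sigma>. c \<sigma> \<noteq> 0})"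
    using hdecomp_sum[OF c hdecomp_support(1)[OF c]] by simp
  also have "\<dots> = (\<Sum>\<sigma>\<in>{\<sigma>. c \<sigma> \<noteq> 0}. h (c \<sigma>))"
    by (rule additive_on_sum[OF S h hdecomp_component_in_ambient[OF gd c]])
  finally show ?thesis
    using c D h0 hdecomp_support[OF c]
    by (intro hdecompI[where F = "{\<sigma>. c \<sigma> \<noteq> 0}"]) (auto simp: hdecomp_def image_subset_iff)
qed

context
  fixes G :: "('g, 'b) monoid_scheme" and D :: "'g \<Rightarrow> 'm::ab_group_add set" and S :: "'m set"
    and h :: "'m \<Rightarrow> 'n::ab_group_add" and E :: "'g \<Rightarrow> 'n set"
  assumes gd: "graded_dsum G D S" and h: "additive_on S h" and inj: "inj_on h S"
    and E: "\<And>\<sigma>. \<sigma> \<in> carrier G \<Longrightarrow> E \<sigma> = h ` D \<sigma>"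
begin

lemma hdecomp_preimage:
  assumes x: "x \<in> S" and c: "hdecomp G E (h x) c"
  shows "\<exists>d. hdecomp G D x d \<and> c = h \<circ> d"
proof -
  have S: "subgrp_add S" using graded_dsum_subgrp[OF gd] .
  have h0: "h 0 = 0" using additive_on_zero[OF S h] .
  define d where "d \<sigma> = (if \<sigma> \<in> carrier G then the_inv_into S h (c \<sigma>) else 0)" for \<sigma>
  have d: "d \<sigma> \<in> D \<sigma> \<and> c \<sigma> = h (d \<sigma>)" if \<sigma>: "\<sigma> \<in> carrier G" for \<sigma>
  proof -
    obtain y where "y \<in> D \<sigma>" "c \<sigma> = h y"
      using hdecomp_component[OF c \<sigma>] E[OF \<sigma>] by blast
    moreover have "y \<in> S" using graded_dsum_component_subset[OF gd \<sigma>] \<open>y \<in> D \<sigma>\<close> by blast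
    ultimately show ?thesis
      using \<sigma> inj by (simp add: d_def the_inv_into_f_f)
  qed
  have c_d: "c = h \<circ> d"
    using d c h0 by (auto simp: d_def hdecomp_def)
  have d_S: "d \<sigma> \<in> S" for \<sigma>
    using d graded_dsum_component_subset[OF gd] subgrp_add_zero[OF S] by (auto simp: d_def)
  have supp: "{\<sigma>. d \<sigma> \<noteq> 0} = {\<sigma>. c \<sigma> \<noteq> 0}"
    using c_d inj_on_additive_eq_0_iff[OF S h inj d_S] by auto
  let ?F = "{\<sigma>. c \<sigma> \<noteq> 0}"
  have "h (sum d ?F) = sum c ?F"
    using additive_on_sum[OF S h d_S] c_d by simp
  also have "\<dots> = h x"
    using hdecomp_sum[OF c hdecomp_support(1)[OF c]] by simp
  finally have "x = sum d ?F"
    using inj x subgrp_add_sum[OF S, of ?F d] d_S by (auto dest: inj_onD)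
  then have "hdecomp G D x d"
    using d hdecomp_support(1)[OF c] supp by (intro hdecompI[where F = ?F]) (auto simp: d_def)
  with c_d show ?thesis by blast
qed

lemma graded_dsum_image: "graded_dsum G E (h ` S)"
  unfolding graded_dsum_def
proof (intro conjI ballI)
  have S: "subgrp_add S" using graded_dsum_subgrp[OF gd] .
  show "subgrp_add (h ` S)" using subgrp_add_image[OF S h] .
  fix \<sigma> assume \<sigma>: "\<sigma> \<in> carrier G"
  have "D \<sigma> \<subseteq> S" using graded_dsum_component_subset[OF gd \<sigma>] .
  then show "subgrp_add (E \<sigma>)" "E \<sigma> \<subseteq> h ` S"
    using subgrp_add_image[OF graded_dsum_component_subgrp[OF gd \<sigma>] additive_on_subset[OF h]] E[OF \<sigma>]
    by auto
next
  fix y assume "y \<in> h ` S"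
  then obtain x where x: "x \<in> S" "y = h x" by blast
  obtain c where c: "hdecomp G D x c" using hdecomp_exists[OF gd x(1)] by blast
  have "hdecomp G E y (h \<circ> c)"
    using hdecomp_image[OF gd h _ c] E x(2) by blast
  moreover have "c1 = c2" if "hdecomp G E y c1" "hdecomp G E y c2" for c1 c2
    using hdecomp_preimage[OF x(1)] hdecomp_unique[OF gd x(1)] that x(2) by metis
  ultimately show "\<exists>!c. hdecomp G E y c" by blast
qed

end

section \<open>Transport of graded module structure along additive injections\<close>

locale A_gr_module =
  fixes G :: "('g, 'b) monoid_scheme" and Ag :: "'g \<Rightarrow> 'a::ring set"
    and M :: "'m::ab_group_add set" and sm :: "'a \<Rightarrow> 'm \<Rightarrow> 'm" and Mg :: "'g \<Rightarrow> 'm set"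
  assumes in_A_gr: "in_A_gr G Ag M sm Mg"
begin

lemma gr_module: "gr_module G Ag M sm Mg"
  using in_A_gr by (simp add: in_A_gr_def)

lemma M_subgrp: "subgrp_add M"
  using gr_module by (simp add: gr_module_def)

lemma sm_closed: "m \<in> M \<Longrightarrow> sm a m \<in> M"
  using gr_module by (simp add: gr_module_def)

lemma sm_additive_left: "m \<in> M \<Longrightarrow> additive_on UNIV (\<lambda>a. sm a m)"
  using gr_module by (simp add: gr_module_def additive_on_def)

lemma sm_additive_right: "additive_on M (sm a)"
  using gr_module by (simp add: gr_module_def additive_on_def)

lemma sm_mult: "m \<in> M \<Longrightarrow> sm (a * b) m = sm a (sm b m)"
  using gr_module by (simp add: gr_module_def)

lemma Mg_dsum: "graded_dsum G Mg M"
  using gr_module by (simp add: gr_module_def)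

lemma sm_grade:
  "\<sigma> \<in> carrier G \<Longrightarrow> \<tau> \<in> carrier G \<Longrightarrow> a \<in> Ag \<sigma> \<Longrightarrow> m \<in> Mg \<tau> \<Longrightarrow> sm a m \<in> Mg (\<sigma> \<otimes>\<^bsub>G\<^esub> \<tau>)"
  using gr_module by (simp add: gr_module_def)

lemma unital: "unital_module M sm"
  using in_A_gr by (simp add: in_A_gr_def)

lemma torsion_free: "m \<in> M \<Longrightarrow> (\<And>a. sm a m = 0) \<Longrightarrow> m = 0"
  using in_A_gr by (simp add: in_A_gr_def torsion_free_def)

lemma Mg_subset: "\<sigma> \<in> carrier G \<Longrightarrow> Mg \<sigma> \<subseteq> M"
  using graded_dsum_component_subset[OF Mg_dsum] .

lemma sm_sum_right: "(\<And>i. i \<in> F \<Longrightarrow> x i \<in> M) \<Longrightarrow> sm a (sum x F) = (\<Sum>i\<in>F. sm a (x i))"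
  using additive_on_sum[OF M_subgrp sm_additive_right] .

lemma sm_sum_left: "m \<in> M \<Longrightarrow> sm (sum x F) m = (\<Sum>i\<in>F. sm (x i) m)"
  using additive_on_sum[OF subgrp_add_UNIV sm_additive_left, of m F x] by simp

end

locale A_gr_transport = A_gr_module G Ag M sm Mg
  for G :: "('g, 'b) monoid_scheme" and Ag :: "'g \<Rightarrow> 'a::ring set"
    and M :: "'m::ab_group_add set" and sm :: "'a \<Rightarrow> 'm \<Rightarrow> 'm" and Mg :: "'g \<Rightarrow> 'm set" +
  fixes N :: "'n::ab_group_add set" and sn :: "'a \<Rightarrow> 'n \<Rightarrow> 'n" and Ng :: "'g \<Rightarrow> 'n set"
    and \<phi> :: "'m \<Rightarrow> 'n"
  assumes monoid: "monoid G"
    and additive: "additive_on M \<phi>"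
    and inj: "inj_on \<phi> M"
    and equivariant: "\<And>a m. m \<in> M \<Longrightarrow> \<phi> (sm a m) = sn a (\<phi> m)"
    and image: "\<phi> ` M = N"
    and image_grading: "\<And>\<sigma>. \<sigma> \<in> carrier G \<Longrightarrow> \<phi> ` Mg \<sigma> = Ng \<sigma>"
begin

lemma target_gr_module: "gr_module G Ag N sn Ng"
  unfolding gr_module_def
proof (intro conjI allI ballI)
  show "subgrp_add N"
    using subgrp_add_image[OF M_subgrp additive] image by simp
  have "graded_dsum G Ng (\<phi> ` M)"
    by (rule graded_dsum_image[OF Mg_dsum additive inj]) (simp add: image_grading)
  then show "graded_dsum G Ng N"
    using image by simp
next
  fix a n assume "n \<in> N"
  then obtain m where m: "m \<in> M" "n = \<phi> m" using image by blast
  then have "sn a n = \<phi> (sm a m)"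
    using equivariant by simp
  then show "sn a n \<in> N"
    using sm_closed[OF m(1)] image by blast
  fix b
  have "sn (a + b) n = \<phi> (sm (a + b) m)"
    using m equivariant by simp
  also have "\<dots> = \<phi> (sm a m + sm b m)"
    using additive_onD[OF sm_additive_left[OF m(1)]] by simp
  also have "\<dots> = sn a n + sn b n"
    using m sm_closed additive_onD[OF additive] equivariant by simp
  finally show "sn (a + b) n = sn a n + sn b n" .
  have "sn (a * b) n = \<phi> (sm a (sm b m))"
    using equivariant[OF m(1), of "a * b"] sm_mult[OF m(1)] m(2) by simp
  also have "\<dots> = sn a (sn b n)"
    using m sm_closed equivariant by simp
  finally show "sn (a * b) n = sn a (sn b n)" .
next
  fix a n n' assume "n \<in> N" "n' \<in> N"
  then obtain m m' where m: "m \<in> M" "n = \<phi> m" "m' \<in> M" "n' = \<phi> m'" using image by blast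
  have "sn a (n + n') = \<phi> (sm a (m + m'))"
    using m additive_onD[OF additive] equivariant subgrp_add_add[OF M_subgrp] by simp
  also have "\<dots> = sn a n + sn a n'"
    using m sm_closed additive_onD[OF additive] additive_onD[OF sm_additive_right] equivariant by simp
  finally show "sn a (n + n') = sn a n + sn a n'" .
next
  fix \<sigma> \<tau> a n assume \<sigma>: "\<sigma> \<in> carrier G" and \<tau>: "\<tau> \<in> carrier G" and a: "a \<in> Ag \<sigma>" and n: "n \<in> Ng \<tau>"
  then obtain m where m: "m \<in> Mg \<tau>" "n = \<phi> m" using image_grading by blast
  have "sn a n = \<phi> (sm a m)"
    using m Mg_subset[OF \<tau>] equivariant by auto
  moreover have "sm a m \<in> Mg (\<sigma> \<otimes>\<^bsub>G\<^esub> \<tau>)"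
    using sm_grade[OF \<sigma> \<tau> a m(1)] .
  ultimately show "sn a n \<in> Ng (\<sigma> \<otimes>\<^bsub>G\<^esub> \<tau>)"
    using image_grading[OF monoid.m_closed[OF monoid \<sigma> \<tau>]] by blast
qed

lemma target_unital: "unital_module N sn"
  unfolding unital_module_def
proof
  fix n assume "n \<in> N"
  then obtain m where m: "m \<in> M" "n = \<phi> m" using image by blast
  then obtain ps where ps: "\<forall>(a, m')\<in>set ps. m' \<in> M" "m = sum_list (map (\<lambda>(a, m'). sm a m') ps)"
    using unital unfolding unital_module_def by blast
  have ps_M: "m' \<in> M" if "(a, m') \<in> set ps" for a m'
    using ps(1) that by blast
  define qs where "qs = map (\<lambda>(a, m'). (a, \<phi> m')) ps"
  have summands_M: "set (map (\<lambda>(a, m'). sm a m') ps) \<subseteq> M"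
    using ps_M sm_closed by auto
  have qs_N: "\<forall>(a, n')\<in>set qs. n' \<in> N"
    using ps_M image unfolding qs_def by auto
  have "n = sum_list (map (\<lambda>(a, m'). \<phi> (sm a m')) ps)"
    using summands_M additive_on_sum_list[OF M_subgrp additive] m(2) ps(2) by (simp add: case_prod_unfold comp_def)
  also have "\<dots> = sum_list (map (\<lambda>(a, n'). sn a n') qs)"
    using ps_M equivariant unfolding qs_def by (auto intro!: arg_cong[where f = sum_list])
  finally show "\<exists>qs. (\<forall>(a, n')\<in>set qs. n' \<in> N) \<and> n = sum_list (map (\<lambda>(a, n'). sn a n') qs)"
    using qs_N by blast
qed

lemma target_torsion_free: "torsion_free N sn"
  unfolding torsion_free_def
proof (intro ballI impI)
  fix n assume "n \<in> N" and annihilated: "\<forall>a. sn a n = 0"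
  then obtain m where m: "m \<in> M" "n = \<phi> m" using image by blast
  have "\<phi> (sm a m) = 0" for a
    using annihilated m equivariant by simp
  then have "m = 0"
    using torsion_free[OF m(1)] inj_on_additive_eq_0_iff[OF M_subgrp additive inj] m(1) sm_closed by blast
  then show "n = 0"
    using m(2) additive_on_zero[OF M_subgrp additive] by simp
qed

lemma target_in_A_gr: "in_A_gr G Ag N sn Ng"
  using target_gr_module target_unital target_torsion_free by (simp add: in_A_gr_def)

lemma gr_hom_map: "gr_hom G M sm Mg N sn Ng \<phi>"
  unfolding gr_hom_def
proof (intro conjI ballI allI)
  show "\<phi> m \<in> N" if "m \<in> M" for m
    using that image by blast
  show "\<phi> (m + m') = \<phi> m + \<phi> m'" if "m \<in> M" "m' \<in> M" for m m'
    using additive_onD[OF additive that] .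
  show "\<phi> (sm a m) = sn a (\<phi> m)" if "m \<in> M" for a m
    using equivariant[OF that] .
  show "\<phi> ` Mg \<sigma> \<subseteq> Ng \<sigma>" if "\<sigma> \<in> carrier G" for \<sigma>
    using image_grading[OF that] by simp
qed

lemma gr_hom_inverse: "gr_hom G N sn Ng M sm Mg (the_inv_into M \<phi>)"
  unfolding gr_hom_def
proof (intro conjI ballI allI)
  fix n assume "n \<in> N"
  then obtain m where m: "m \<in> M" "n = \<phi> m" using image by blast
  then show "the_inv_into M \<phi> n \<in> M"
    using inj by (simp add: the_inv_into_f_f)
  fix a
  show "the_inv_into M \<phi> (sn a n) = sm a (the_inv_into M \<phi> n)"
    using m inj sm_closed equivariant by (metis the_inv_into_f_f)
next
  fix n n' assume "n \<in> N" "n' \<in> N"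
  then obtain m m' where "m \<in> M" "n = \<phi> m" "m' \<in> M" "n' = \<phi> m'" using image by blast
  then show "the_inv_into M \<phi> (n + n') = the_inv_into M \<phi> n + the_inv_into M \<phi> n'"
    using inj subgrp_add_add[OF M_subgrp] additive_onD[OF additive] by (metis the_inv_into_f_f)
next
  fix \<sigma> assume \<sigma>: "\<sigma> \<in> carrier G"
  show "the_inv_into M \<phi> ` Ng \<sigma> \<subseteq> Mg \<sigma>"
    using Mg_subset[OF \<sigma>] inj image_grading[OF \<sigma>, symmetric]
    by (auto simp: the_inv_into_f_f subset_iff)
qed

end

section \<open>The map \<open>\<chi>\<close>\<close>

lemma chi_natural:
  assumes "gr_hom G M sm Mg N sn Ng f" "m \<in> M"
  shows "f \<circ> chi sm m = chi sn (f m)"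
  using assms by (auto simp: gr_hom_def chi_def)

context A_gr_module
begin

lemma chi_additive: "additive_on M (chi sm)"
  using additive_onD[OF sm_additive_right] by (auto simp: additive_on_def chi_def)

lemma chi_sm: "m \<in> M \<Longrightarrow> chi sm (sm a m) = hom_act a (chi sm m)"
  by (auto simp: chi_def hom_act_def sm_mult)

lemma inj_on_chi: "inj_on (chi sm) M"
proof (rule inj_onI)
  fix m m' assume m: "m \<in> M" "m' \<in> M" and eq: "chi sm m = chi sm m'"
  have "sm a (m - m') = 0" for a
    using additive_on_diff[OF M_subgrp sm_additive_right m] fun_cong[OF eq, of a]
    by (simp add: chi_def)
  then show "m = m'"
    using torsion_free subgrp_add_diff[OF M_subgrp m] by fastforce
qed

lemma chi_HOM_deg:
  assumes \<sigma>: "\<sigma> \<in> carrier G" and m: "m \<in> Mg \<sigma>"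
  shows "chi sm m \<in> HOM_deg G Ag M sm Mg \<sigma>"
proof -
  have "m \<in> M" using Mg_subset[OF \<sigma>] m by blast
  then show ?thesis
    using \<sigma> m additive_onD[OF sm_additive_left]
    by (auto simp: HOM_deg_def chi_def sm_closed sm_mult sm_grade)
qed

lemma chi_HOM:
  assumes "m \<in> M"
  shows "chi sm m \<in> HOM G Ag M sm Mg"
proof -
  obtain c where "hdecomp G Mg m c"
    using hdecomp_exists[OF Mg_dsum assms] by blast
  then have "hdecomp G (HOM_deg G Ag M sm Mg) (chi sm m) (chi sm \<circ> c)"
    by (rule hdecomp_image[OF Mg_dsum chi_additive, rotated]) (use chi_HOM_deg in blast)
  then show ?thesis
    unfolding HOM_def by blast
qed

lemma HOM_apply:
  assumes "f \<in> HOM G Ag M sm Mg"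
  shows "f x \<in> M" "f (a * x) = sm a (f x)"
proof -
  obtain c where c: "hdecomp G (HOM_deg G Ag M sm Mg) f c"
    using assms unfolding HOM_def by blast
  let ?S = "{\<sigma>. c \<sigma> \<noteq> 0}"
  have c_S: "c \<sigma> \<in> HOM_deg G Ag M sm Mg \<sigma>" if "\<sigma> \<in> ?S" for \<sigma>
    using hdecomp_component[OF c] hdecomp_support(2)[OF c] that by blast
  have f_apply: "f y = (\<Sum>\<sigma>\<in>?S. c \<sigma> y)" for y
    using hdecomp_sum[OF c hdecomp_support(1)[OF c]] by (simp add: sum_apply)
  show "f x \<in> M"
    unfolding f_apply using c_S by (intro subgrp_add_sum[OF M_subgrp]) (auto simp: HOM_deg_def)
  show "f (a * x) = sm a (f x)"
    unfolding f_apply using c_S by (subst sm_sum_right) (auto simp: HOM_deg_def)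
qed

lemma hom_act_HOM: "f \<in> HOM G Ag M sm Mg \<Longrightarrow> hom_act a f = chi sm (f a)"
  by (auto simp: hom_act_def chi_def HOM_apply(2))

lemma AHOM_eq_image_chi: "AHOM G Ag M sm Mg = chi sm ` M"
proof
  show "AHOM G Ag M sm Mg \<subseteq> chi sm ` M"
  proof
    fix f assume "f \<in> AHOM G Ag M sm Mg"
    then obtain ps where ps: "\<forall>(a, g)\<in>set ps. g \<in> HOM G Ag M sm Mg"
        and f: "f = sum_list (map (\<lambda>(a, g). hom_act a g) ps)"
      unfolding AHOM_def by blast
    have ps_HOM: "g \<in> HOM G Ag M sm Mg" if "(a, g) \<in> set ps" for a g
      using ps that by blast
    have values_M: "set (map (\<lambda>(a, g). g a) ps) \<subseteq> M"
      using ps_HOM HOM_apply(1) by auto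
    have "f = sum_list (map (\<lambda>(a, g). chi sm (g a)) ps)"
      unfolding f using ps_HOM hom_act_HOM by (auto intro!: arg_cong[where f = sum_list])
    also have "\<dots> = chi sm (sum_list (map (\<lambda>(a, g). g a) ps))"
      using additive_on_sum_list[OF M_subgrp chi_additive values_M] by (simp add: case_prod_unfold comp_def)
    finally show "f \<in> chi sm ` M"
      using subgrp_add_sum_list[OF M_subgrp values_M] by blast
  qed
next
  show "chi sm ` M \<subseteq> AHOM G Ag M sm Mg"
  proof
    fix f assume "f \<in> chi sm ` M"
    then obtain m where m: "m \<in> M" "f = chi sm m" by blast
    then obtain ps where ps: "\<forall>(a, n)\<in>set ps. n \<in> M" "m = sum_list (map (\<lambda>(a, n). sm a n) ps)"
      using unital unfolding unital_module_def by blast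
    have ps_M: "n \<in> M" if "(a, n) \<in> set ps" for a n
      using ps(1) that by blast
    have summands_M: "set (map (\<lambda>(a, n). sm a n) ps) \<subseteq> M"
      using ps_M sm_closed by auto
    have "f = sum_list (map (\<lambda>(a, n). chi sm (sm a n)) ps)"
      using m(2) ps(2) additive_on_sum_list[OF M_subgrp chi_additive summands_M]
      by (simp add: case_prod_unfold comp_def)
    also have "\<dots> = sum_list (map (\<lambda>(a, g). hom_act a g) (map (\<lambda>(a, n). (a, chi sm n)) ps))"
      using ps_M chi_sm by (auto intro!: arg_cong[where f = sum_list])
    finally show "f \<in> AHOM G Ag M sm Mg"
      using ps_M chi_HOM unfolding AHOM_def by fastforce
  qed
qed

end

locale graded_ring_A_gr_module = A_gr_module G Ag M sm Mg
  for G :: "('g, 'b) monoid_scheme" and Ag :: "'g \<Rightarrow> 'a::ring set"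
    and M :: "'m::ab_group_add set" and sm :: "'a \<Rightarrow> 'm \<Rightarrow> 'm" and Mg :: "'g \<Rightarrow> 'm set" +
  assumes graded_ring: "graded_ring G Ag"
begin

lemma group: "group G"
  using graded_ring by (simp add: graded_ring_def)

lemma Ag_dsum: "graded_dsum G Ag UNIV"
  using graded_ring by (simp add: graded_ring_def)

lemma mult_closed: "\<sigma> \<in> carrier G \<Longrightarrow> \<tau> \<in> carrier G \<Longrightarrow> \<sigma> \<otimes>\<^bsub>G\<^esub> \<tau> \<in> carrier G"
  using group by (simp add: group.is_monoid monoid.m_closed)

lemma annihilated_by_homogeneous:
  assumes n: "n \<in> M" and homogeneous_0: "\<And>\<tau> y. \<tau> \<in> carrier G \<Longrightarrow> y \<in> Ag \<tau> \<Longrightarrow> sm y n = 0"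
  shows "n = 0"
proof (rule torsion_free[OF n])
  fix x :: 'a
  obtain e where e: "hdecomp G Ag x e"
    using hdecomp_exists[OF Ag_dsum] by blast
  let ?E = "{\<tau>. e \<tau> \<noteq> 0}"
  have "x = sum e ?E"
    by (rule hdecomp_sum[OF e hdecomp_support(1)[OF e]]) simp
  then have "sm x n = (\<Sum>\<tau>\<in>?E. sm (e \<tau>) n)"
    using sm_sum_left[OF n] by simp
  also have "\<dots> = 0"
    using homogeneous_0 hdecomp_component[OF e] hdecomp_support(2)[OF e] by (auto intro!: sum.neutral)
  finally show "sm x n = 0" .
qed

lemma mem_Mg_if_chi_HOM_deg:
  assumes \<sigma>: "\<sigma> \<in> carrier G" and m: "m \<in> M" and chi_m: "chi sm m \<in> HOM_deg G Ag M sm Mg \<sigma>"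
  shows "m \<in> Mg \<sigma>"
proof -
  obtain c where c: "hdecomp G Mg m c"
    using hdecomp_exists[OF Mg_dsum m] by blast
  define K where "K = insert \<sigma> {\<rho>. c \<rho> \<noteq> 0}"
  have K: "finite K" "K \<subseteq> carrier G" "\<sigma> \<in> K"
    using hdecomp_support[OF c] \<sigma> by (auto simp: K_def)
  have m_K: "m = sum c K"
    by (rule hdecomp_sum[OF c K(1)]) (auto simp: K_def)
  have c_M: "c \<rho> \<in> M" for \<rho>
    using hdecomp_component_in_ambient[OF Mg_dsum c] .
  have c_0: "c \<rho> = 0" if \<rho>: "\<rho> \<in> K" "\<rho> \<noteq> \<sigma>" for \<rho>
  proof (rule annihilated_by_homogeneous[OF c_M])
    fix \<tau> y assume \<tau>: "\<tau> \<in> carrier G" and y: "y \<in> Ag \<tau>"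
    define d where "d \<rho>' = sm y (c \<rho>') - (if \<rho>' = \<sigma> then sm y m else 0)" for \<rho>'
    have "sum d K = sm y (sum c K) - sm y m"
      using sm_sum_right[of K c y] c_M K(1,3) by (simp add: d_def sum_subtractf)
    then have sum_d: "sum d K = 0"
      using m_K by simp
    have d: "d \<rho>' \<in> Mg (\<tau> \<otimes>\<^bsub>G\<^esub> \<rho>')" if "\<rho>' \<in> K" for \<rho>'
    proof -
      have \<rho>': "\<rho>' \<in> carrier G" using K(2) that by blast
      have subgrp: "subgrp_add (Mg (\<tau> \<otimes>\<^bsub>G\<^esub> \<rho>'))"
        using graded_dsum_component_subgrp[OF Mg_dsum mult_closed[OF \<tau> \<rho>']] .
      have "sm y m \<in> Mg (\<tau> \<otimes>\<^bsub>G\<^esub> \<sigma>)"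
        using chi_m \<tau> y by (auto simp: HOM_deg_def chi_def image_subset_iff)
      then have "(if \<rho>' = \<sigma> then sm y m else 0) \<in> Mg (\<tau> \<otimes>\<^bsub>G\<^esub> \<rho>')"
        using subgrp_add_zero[OF subgrp] by auto
      then show ?thesis
        unfolding d_def
        by (rule subgrp_add_diff[OF subgrp sm_grade[OF \<tau> \<rho>' y hdecomp_component[OF c \<rho>']]])
    qed
    have "inj_on (\<lambda>\<rho>'. \<tau> \<otimes>\<^bsub>G\<^esub> \<rho>') K"
      using inj_on_subset[OF group.inj_on_cmult[OF group \<tau>] K(2)] .
    moreover have "(\<lambda>\<rho>'. \<tau> \<otimes>\<^bsub>G\<^esub> \<rho>') ` K \<subseteq> carrier G"
      using K(2) mult_closed[OF \<tau>] by auto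
    ultimately have "d \<rho> = 0"
      using graded_dsum_independent[OF Mg_dsum K(1) _ _ d sum_d \<rho>(1)] by blast
    then show "sm y (c \<rho>) = 0"
      using \<rho>(2) by (simp add: d_def)
  qed
  have "m = c \<sigma>"
    using m_K sum.remove[OF K(1,3), of c] c_0 by simp
  then show ?thesis
    using hdecomp_component[OF c \<sigma>] by simp
qed

lemma AHOM_deg_eq_image_chi:
  assumes \<sigma>: "\<sigma> \<in> carrier G"
  shows "AHOM_deg G Ag M sm Mg \<sigma> = chi sm ` Mg \<sigma>"
proof (intro equalityI subsetI)
  fix f assume "f \<in> AHOM_deg G Ag M sm Mg \<sigma>"
  then obtain m where "m \<in> M" "f = chi sm m" "chi sm m \<in> HOM_deg G Ag M sm Mg \<sigma>"
    unfolding AHOM_deg_def AHOM_eq_image_chi by blast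
  then show "f \<in> chi sm ` Mg \<sigma>"
    using mem_Mg_if_chi_HOM_deg[OF \<sigma>] by blast
next
  fix f assume "f \<in> chi sm ` Mg \<sigma>"
  then obtain m where "m \<in> Mg \<sigma>" "f = chi sm m" by blast
  then show "f \<in> AHOM_deg G Ag M sm Mg \<sigma>"
    using Mg_subset[OF \<sigma>] chi_HOM_deg[OF \<sigma>] unfolding AHOM_deg_def AHOM_eq_image_chi by blast
qed

sublocale chi: A_gr_transport G Ag M sm Mg "AHOM G Ag M sm Mg" hom_act "AHOM_deg G Ag M sm Mg" "chi sm"
  by (rule A_gr_transport.intro[OF A_gr_module_axioms A_gr_transport_axioms.intro])
    (use group.is_monoid[OF group] chi_additive inj_on_chi chi_sm AHOM_eq_image_chi AHOM_deg_eq_image_chi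
      in simp_all)

end

theorem proposition3p2:
  fixes G :: "('g, 'b) monoid_scheme"
    and Ag :: "'g \<Rightarrow> 'a::ring set"
    and M :: "'m::ab_group_add set" and sm :: "'a \<Rightarrow> 'm \<Rightarrow> 'm" and Mg :: "'g \<Rightarrow> 'm set"
    and N :: "'n::ab_group_add set" and sn :: "'a \<Rightarrow> 'n \<Rightarrow> 'n" and Ng :: "'g \<Rightarrow> 'n set"
  assumes "graded_ring G Ag"
    and "idempotent_ring TYPE('a)"
    and "in_A_gr G Ag M sm Mg"
    and "in_A_gr G Ag N sn Ng"
  shows "in_A_gr G Ag (AHOM G Ag M sm Mg) hom_act (AHOM_deg G Ag M sm Mg)
       \<and> bij_betw (chi sm) M (AHOM G Ag M sm Mg)
       \<and> gr_hom G M sm Mg (AHOM G Ag M sm Mg) hom_act (AHOM_deg G Ag M sm Mg) (chi sm)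
       \<and> gr_hom G (AHOM G Ag M sm Mg) hom_act (AHOM_deg G Ag M sm Mg) M sm Mg
           (the_inv_into M (chi sm))
       \<and> (\<forall>f. gr_hom G M sm Mg N sn Ng f \<longrightarrow>
            (\<forall>h\<in>AHOM G Ag M sm Mg. f \<circ> h \<in> AHOM G Ag N sn Ng)
            \<and> (\<forall>m\<in>M. f \<circ> chi sm m = chi sn (f m)))"
proof -
  interpret M: graded_ring_A_gr_module G Ag M sm Mg
    using assms(1,3) by unfold_locales
  interpret N: A_gr_module G Ag N sn Ng
    using assms(4) by unfold_locales
  have "f \<circ> h \<in> AHOM G Ag N sn Ng"
    if f: "gr_hom G M sm Mg N sn Ng f" and h: "h \<in> AHOM G Ag M sm Mg" for f h
  proof -
    obtain m where "m \<in> M" "h = chi sm m"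
      using h M.AHOM_eq_image_chi by blast
    moreover have "f m \<in> N"
      using f \<open>m \<in> M\<close> by (simp add: gr_hom_def)
    ultimately show ?thesis
      using chi_natural[OF f] N.AHOM_eq_image_chi by simp
  qed
  then show ?thesis
    using M.chi.target_in_A_gr M.inj_on_chi M.AHOM_eq_image_chi M.chi.gr_hom_map M.chi.gr_hom_inverse
      chi_natural by (auto simp: bij_betw_def)
qed

end
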